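(* Let $m,n$ be positive integers with $m \neq n$ and $\gcd(m,n) > 1$. Then $K_m \otimes K_n$ is not a circulant graph.
   Context: Graphs have no multiple edges but may have loops. The tensor product $G \otimes H$ of graphs $G$ and $H$ has vertex set $V(G)\times V(H)$, with $(g,h)$ adjacent to $(g',h')$ if and only if $g$ is adjacent to $g'$ in $G$ and $h$ is adjacent to $h'$ in $H$. For an integer $n\ge 1$ and a set $S$ of integers, the circulant graph $C_nS$ has vertex set $\{0,1,\dots,n-1\}$, with $i$ adjacent to $j$ if and only if $i-j \equiv \pm s \pmod n$ for some $s\in S$. A graph is circulant if it is isomorphic to some $C_nS$; equivalently, if its automorphism group contains a cyclic subgroup acting transitively on the vertices. $K_n$ denotes the complete graph on $n$ vertices (no loops). *)

theory Defs
  imports "HOL-Number_Theory.Cong"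
begin

text \<open>A graph (possibly with loops, no multiple edges) is given by a vertex set and a
symmetric adjacency relation on it.\<close>

type_synonym 'a graph = "'a set \<times> ('a \<Rightarrow> 'a \<Rightarrow> bool)"

definition verts :: "'a graph \<Rightarrow> 'a set" where "verts G = fst G"
definition adj :: "'a graph \<Rightarrow> 'a \<Rightarrow> 'a \<Rightarrow> bool" where "adj G = snd G"

definition complete_graph :: "nat \<Rightarrow> nat graph" where
  "complete_graph n = ({0..<n}, \<lambda>i j. i \<noteq> j)"

definition tensor_graph :: "'a graph \<Rightarrow> 'b graph \<Rightarrow> ('a \<times> 'b) graph" where
  "tensor_graph G H = (verts G \<times> verts H,
     \<lambda>(g,h) (g',h'). adj G g g' \<and> adj H h h')"

definition circulant_graph :: "nat \<Rightarrow> int set \<Rightarrow> nat graph" where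
  "circulant_graph n S = ({0..<n},
     \<lambda>i j. \<exists>s\<in>S. [int i - int j = s] (mod int n) \<or> [int i - int j = - s] (mod int n))"

definition graph_iso :: "'a graph \<Rightarrow> 'b graph \<Rightarrow> bool" where
  "graph_iso G H \<longleftrightarrow> (\<exists>f. bij_betw f (verts G) (verts H) \<and>
     (\<forall>u\<in>verts G. \<forall>v\<in>verts G. adj G u v \<longleftrightarrow> adj H (f u) (f v)))"

definition is_circulant :: "'a graph \<Rightarrow> bool" where
  "is_circulant G \<longleftrightarrow> (\<exists>n\<ge>1. \<exists>S. graph_iso G (circulant_graph n S))"

end

theory Submission
  imports Defs
begin

text \<open>If a graph is circulant, the rotation \<open>i \<mapsto> i + 1 mod N\<close> transports to an automorphism
  \<open>\<phi>\<close> whose powers fix a vertex only at multiples of the number \<open>N\<close> of vertices. In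
  \<open>K\<^sub>m \<otimes> K\<^sub>n\<close> two distinct non-adjacent vertices lie in a common row or column, and their
  common non-neighbourhood is that row (of size \<open>n\<close>) or that column (of size \<open>m\<close>); for
  \<open>m \<noteq> n\<close> every automorphism therefore preserves rows and columns, i.e. is a product
  \<open>\<alpha> \<times> \<beta>\<close> of permutations. If \<open>\<alpha>\<close> returns \<open>0\<close> to itself after \<open>p \<le> m\<close> steps and \<open>\<beta>\<close>
  after \<open>q \<le> n\<close> steps, then \<open>\<phi>\<^bsup>lcm p q\<^esup>\<close> fixes \<open>(0, 0)\<close>, so \<open>m n\<close> divides
  \<open>lcm p q \<le> p q \<le> m n\<close>, which forces \<open>lcm m n = m n\<close>, i.e. \<open>gcd m n = 1\<close>.\<close>

definition graph_aut :: "'a graph \<Rightarrow> ('a \<Rightarrow> 'a) \<Rightarrow> bool" where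
  "graph_aut G \<phi> \<longleftrightarrow> bij_betw \<phi> (verts G) (verts G) \<and>
     (\<forall>u\<in>verts G. \<forall>v\<in>verts G. adj G u v \<longleftrightarrow> adj G (\<phi> u) (\<phi> v))"

lemma graph_aut_funpow_in_verts:
  "graph_aut G \<phi> \<Longrightarrow> u \<in> verts G \<Longrightarrow> (\<phi> ^^ k) u \<in> verts G"
  unfolding graph_aut_def using bij_betw_funpow bij_betw_apply by metis

lemma verts_circulant_graph [simp]: "verts (circulant_graph N S) = {0..<N}"
  by (simp add: circulant_graph_def verts_def)

lemma circulant_rotation_aut:
  assumes "N \<ge> 1"
  shows "graph_aut (circulant_graph N S) (\<lambda>i. (i + 1) mod N)"
proof -
  let ?r = "\<lambda>i. (i + 1) mod N"
  have diff_cong: "[int (?r i) - int (?r j) = int i - int j] (mod int N)" for i j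
  proof -
    have "(int (?r i) - int (?r j)) mod int N
        = ((int i + 1) mod int N - (int j + 1) mod int N) mod int N"
      by (simp add: of_nat_mod ac_simps)
    also have "\<dots> = (int i - int j) mod int N"
      by (simp add: mod_diff_eq)
    finally show ?thesis by (simp add: cong_def)
  qed
  have "[int (?r i) - int (?r j) = t] (mod int N) \<longleftrightarrow> [int i - int j = t] (mod int N)" for i j t
    using diff_cong[of i j] by (meson cong_sym cong_trans)
  then have "adj (circulant_graph N S) (?r i) (?r j) \<longleftrightarrow> adj (circulant_graph N S) i j" for i j
    by (simp add: circulant_graph_def adj_def)
  moreover have "inj_on ?r {0..<N}"
    by (rule inj_onI) (auto simp: mod_Suc split: if_splits)
  moreover have "?r ` {0..<N} \<subseteq> {0..<N}"
    using assms by auto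
  ultimately show ?thesis
    by (auto simp: graph_aut_def bij_betw_def endo_inj_surj)
qed

lemma funpow_rotation: "x < N \<Longrightarrow> ((\<lambda>i. (i + 1) mod N) ^^ k) x = (x + k) mod N"
  by (induction k) (simp_all add: mod_Suc_eq)

lemma graph_iso_conj_aut:
  assumes f: "bij_betw f (verts G) (verts H)"
    and f_adj: "\<forall>u\<in>verts G. \<forall>v\<in>verts G. adj G u v \<longleftrightarrow> adj H (f u) (f v)"
    and \<rho>: "graph_aut H \<rho>"
  defines "\<phi> \<equiv> inv_into (verts G) f \<circ> \<rho> \<circ> f"
  shows "graph_aut G \<phi>"
    and "u \<in> verts G \<Longrightarrow> f ((\<phi> ^^ k) u) = (\<rho> ^^ k) (f u)"
proof -
  let ?g = "inv_into (verts G) f"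
  have g: "bij_betw ?g (verts H) (verts G)"
    using f by (rule bij_betw_inv_into)
  have f_g: "f (?g y) = y" if "y \<in> verts H" for y
    using f that by (simp add: bij_betw_inv_into_right)
  have \<phi>_bij: "bij_betw \<phi> (verts G) (verts G)"
    unfolding \<phi>_def using \<rho> f g by (auto simp: graph_aut_def intro: bij_betw_trans)
  have f_\<phi>: "f (\<phi> u) = \<rho> (f u)" if "u \<in> verts G" for u
  proof -
    have "\<rho> (f u) \<in> verts H"
      using \<rho> bij_betw_apply[OF f that] by (auto simp: graph_aut_def intro: bij_betw_apply)
    then show ?thesis by (simp add: \<phi>_def f_g)
  qed
  show "graph_aut G \<phi>"
    unfolding graph_aut_def
  proof (intro conjI \<phi>_bij ballI)
    fix u v assume uv: "u \<in> verts G" "v \<in> verts G"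
    then have "\<phi> u \<in> verts G" "\<phi> v \<in> verts G"
      using \<phi>_bij by (auto intro: bij_betw_apply)
    then have "adj G (\<phi> u) (\<phi> v) \<longleftrightarrow> adj H (\<rho> (f u)) (\<rho> (f v))"
      using f_adj uv by (simp add: f_\<phi>)
    also have "\<dots> \<longleftrightarrow> adj G u v"
      using \<rho> f_adj uv bij_betw_apply[OF f] by (simp add: graph_aut_def)
    finally show "adj G u v \<longleftrightarrow> adj G (\<phi> u) (\<phi> v)" ..
  qed
  then show "f ((\<phi> ^^ k) u) = (\<rho> ^^ k) (f u)" if "u \<in> verts G"
    using that by (induction k) (simp_all add: f_\<phi> graph_aut_funpow_in_verts)
qed

lemma is_circulant_obtains_regular_aut:
  assumes "is_circulant G"
  obtains \<phi> where "graph_aut G \<phi>"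
    and "\<And>u k. u \<in> verts G \<Longrightarrow> (\<phi> ^^ k) u = u \<Longrightarrow> card (verts G) dvd k"
proof -
  obtain N S f where N: "N \<ge> 1" and f: "bij_betw f (verts G) {0..<N}"
    and f_adj: "\<forall>u\<in>verts G. \<forall>v\<in>verts G. adj G u v \<longleftrightarrow> adj (circulant_graph N S) (f u) (f v)"
    using assms by (auto simp: is_circulant_def graph_iso_def)
  let ?\<phi> = "inv_into (verts G) f \<circ> (\<lambda>i. (i + 1) mod N) \<circ> f"
  have f': "bij_betw f (verts G) (verts (circulant_graph N S))"
    using f by simp
  note conj = graph_iso_conj_aut[OF f' f_adj circulant_rotation_aut[OF N]]
  have "card (verts G) dvd k" if u: "u \<in> verts G" and fix_u: "(?\<phi> ^^ k) u = u" for u k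
  proof -
    have "f u < N"
      using f u by (auto dest: bij_betw_apply)
    moreover have "(f u + k) mod N = f u"
      using conj(2)[OF u, of k] fix_u funpow_rotation[OF \<open>f u < N\<close>] by simp
    ultimately have "N dvd k"
      by (metis cong_add_lcancel_0_nat cong_def cong_0_iff mod_less)
    then show ?thesis
      using bij_betw_same_card[OF f] by simp
  qed
  with conj(1) f show thesis
    by (intro that) simp_all
qed

definition common_non_nbhd :: "'a graph \<Rightarrow> 'a \<Rightarrow> 'a \<Rightarrow> 'a set" where
  "common_non_nbhd G u v = {w \<in> verts G. \<not> adj G u w \<and> \<not> adj G v w}"

lemma card_common_non_nbhd_aut:
  assumes \<phi>: "graph_aut G \<phi>" and uv: "u \<in> verts G" "v \<in> verts G"
  shows "card (common_non_nbhd G (\<phi> u) (\<phi> v)) = card (common_non_nbhd G u v)"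
proof -
  have bij: "bij_betw \<phi> (verts G) (verts G)"
    using \<phi> by (simp add: graph_aut_def)
  have mem: "w \<in> common_non_nbhd G u v \<longleftrightarrow> \<phi> w \<in> common_non_nbhd G (\<phi> u) (\<phi> v)"
    if "w \<in> verts G" for w
    using \<phi> uv that by (auto simp: common_non_nbhd_def graph_aut_def bij_betw_apply)
  have "\<phi> ` common_non_nbhd G u v = common_non_nbhd G (\<phi> u) (\<phi> v)"
  proof (intro equalityI subsetI)
    fix w' assume w': "w' \<in> common_non_nbhd G (\<phi> u) (\<phi> v)"
    then obtain w where "w \<in> verts G" "w' = \<phi> w"
      using bij by (auto simp: common_non_nbhd_def bij_betw_def)
    with w' mem show "w' \<in> \<phi> ` common_non_nbhd G u v" by blast
  qed (use mem in \<open>auto simp: common_non_nbhd_def\<close>)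
  moreover have "inj_on \<phi> (common_non_nbhd G u v)"
    using bij by (auto simp: bij_betw_def common_non_nbhd_def intro: inj_on_subset)
  ultimately show ?thesis
    by (metis card_image)
qed

lemma verts_tensor_complete [simp]:
  "verts (tensor_graph (complete_graph m) (complete_graph n)) = {0..<m} \<times> {0..<n}"
  by (simp add: tensor_graph_def complete_graph_def verts_def)

lemma adj_tensor_complete [simp]:
  "adj (tensor_graph (complete_graph m) (complete_graph n)) u v \<longleftrightarrow> fst u \<noteq> fst v \<and> snd u \<noteq> snd v"
  by (simp add: tensor_graph_def complete_graph_def adj_def case_prod_beta)

lemma card_common_non_nbhd_tensor_complete:
  assumes "u \<in> {0..<m} \<times> {0..<n}" "v \<in> {0..<m} \<times> {0..<n}" "u \<noteq> v"
    and "\<not> adj (tensor_graph (complete_graph m) (complete_graph n)) u v"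
  shows "card (common_non_nbhd (tensor_graph (complete_graph m) (complete_graph n)) u v)
    = (if fst u = fst v then n else m)"
proof -
  obtain i j i' j' where uv: "u = (i, j)" "v = (i', j')"
    by fastforce
  show ?thesis
  proof (cases "i = i'")
    case True
    with assms uv have "common_non_nbhd (tensor_graph (complete_graph m) (complete_graph n)) u v
        = {i} \<times> {0..<n}"
      by (auto simp: common_non_nbhd_def)
    with True uv show ?thesis by simp
  next
    case False
    with assms uv have "common_non_nbhd (tensor_graph (complete_graph m) (complete_graph n)) u v
        = {0..<m} \<times> {j}"
      by (auto simp: common_non_nbhd_def)
    with False uv show ?thesis by simp
  qed
qed

lemma tensor_complete_aut_same_row_iff:
  assumes \<phi>: "graph_aut (tensor_graph (complete_graph m) (complete_graph n)) \<phi>" and "m \<noteq> n"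
    and uv: "u \<in> {0..<m} \<times> {0..<n}" "v \<in> {0..<m} \<times> {0..<n}" "u \<noteq> v" "fst u = fst v \<or> snd u = snd v"
  shows "fst (\<phi> u) = fst (\<phi> v) \<longleftrightarrow> fst u = fst v"
proof -
  let ?G = "tensor_graph (complete_graph m) (complete_graph n)"
  have bij: "bij_betw \<phi> ({0..<m} \<times> {0..<n}) ({0..<m} \<times> {0..<n})"
    using \<phi> by (simp add: graph_aut_def)
  have \<phi>uv: "\<phi> u \<in> {0..<m} \<times> {0..<n}" "\<phi> v \<in> {0..<m} \<times> {0..<n}" "\<phi> u \<noteq> \<phi> v"
    using uv(1-3) bij_betw_apply[OF bij] inj_on_contraD[OF bij_betw_imp_inj_on[OF bij]] by auto
  have "\<not> adj ?G u v"
    using uv(4) by simp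
  then have "\<not> adj ?G (\<phi> u) (\<phi> v)"
    using \<phi> uv(1,2) unfolding graph_aut_def verts_tensor_complete by blast
  then have "card (common_non_nbhd ?G (\<phi> u) (\<phi> v)) = (if fst (\<phi> u) = fst (\<phi> v) then n else m)"
    using \<phi>uv by (rule card_common_non_nbhd_tensor_complete[rotated 3])
  moreover have "card (common_non_nbhd ?G u v) = (if fst u = fst v then n else m)"
    using uv \<open>\<not> adj ?G u v\<close> by (intro card_common_non_nbhd_tensor_complete)
  moreover have "card (common_non_nbhd ?G (\<phi> u) (\<phi> v)) = card (common_non_nbhd ?G u v)"
    using uv by (intro card_common_non_nbhd_aut[OF \<phi>]) simp_all
  ultimately show ?thesis
    using \<open>m \<noteq> n\<close> by (cases "fst u = fst v"; cases "fst (\<phi> u) = fst (\<phi> v)") simp_all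
qed

lemma bij_betw_prod_factors:
  assumes \<phi>: "bij_betw \<phi> (A \<times> B) (A \<times> B)" and "finite A" "finite B" "a \<in> A" "b \<in> B"
    and \<phi>_eq: "\<And>x y. x \<in> A \<Longrightarrow> y \<in> B \<Longrightarrow> \<phi> (x, y) = (\<alpha> x, \<beta> y)"
  shows "bij_betw \<alpha> A A" and "bij_betw \<beta> B B"
proof -
  have maps: "\<alpha> x \<in> A" "\<beta> y \<in> B" if "x \<in> A" "y \<in> B" for x y
    using bij_betw_apply[OF \<phi>, of "(x, y)"] that by (simp_all add: \<phi>_eq)
  have inj: "\<phi> (x, y) = \<phi> (x', y') \<Longrightarrow> (x, y) = (x', y')"
    if "x \<in> A" "y \<in> B" "x' \<in> A" "y' \<in> B" for x y x' y'
    using \<phi> that by (auto simp: bij_betw_def inj_on_def)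
  have "inj_on \<alpha> A" "inj_on \<beta> B"
    using inj \<open>a \<in> A\<close> \<open>b \<in> B\<close> by (auto intro!: inj_onI simp: \<phi>_eq)
  moreover have "\<alpha> ` A \<subseteq> A" "\<beta> ` B \<subseteq> B"
    using maps \<open>a \<in> A\<close> \<open>b \<in> B\<close> by auto
  ultimately show "bij_betw \<alpha> A A" "bij_betw \<beta> B B"
    using endo_inj_surj \<open>finite A\<close> \<open>finite B\<close> unfolding bij_betw_def by blast+
qed

lemma tensor_complete_aut_is_product:
  assumes \<phi>: "graph_aut (tensor_graph (complete_graph m) (complete_graph n)) \<phi>"
    and "m \<noteq> n" "m \<ge> 1" "n \<ge> 1"
  obtains \<alpha> \<beta> where "bij_betw \<alpha> {0..<m} {0..<m}" "bij_betw \<beta> {0..<n} {0..<n}"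
    and "\<And>i j. i < m \<Longrightarrow> j < n \<Longrightarrow> \<phi> (i, j) = (\<alpha> i, \<beta> j)"
proof -
  define \<alpha> where "\<alpha> i = fst (\<phi> (i, 0))" for i
  define \<beta> where "\<beta> j = snd (\<phi> (0, j))" for j
  note same_row = tensor_complete_aut_same_row_iff[OF \<phi> \<open>m \<noteq> n\<close>]
  have aut_adj: "adj (tensor_graph (complete_graph m) (complete_graph n)) u v
      \<longleftrightarrow> adj (tensor_graph (complete_graph m) (complete_graph n)) (\<phi> u) (\<phi> v)"
    if "u \<in> {0..<m} \<times> {0..<n}" "v \<in> {0..<m} \<times> {0..<n}" for u v
    using \<phi> that unfolding graph_aut_def verts_tensor_complete by blast
  have \<phi>_eq: "\<phi> (i, j) = (\<alpha> i, \<beta> j)" if "i \<in> {0..<m}" "j \<in> {0..<n}" for i j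
  proof -
    have "fst (\<phi> (i, j)) = \<alpha> i"
    proof (cases "j = 0")
      case False
      then show ?thesis
        using same_row[of "(i, j)" "(i, 0)"] that \<open>n \<ge> 1\<close> by (simp add: \<alpha>_def)
    qed (simp add: \<alpha>_def)
    moreover have "snd (\<phi> (i, j)) = \<beta> j"
    proof (cases "i = 0")
      case False
      then have "fst (\<phi> (i, j)) \<noteq> fst (\<phi> (0, j))"
        using same_row[of "(i, j)" "(0, j)"] that \<open>m \<ge> 1\<close> by simp
      moreover have "\<not> adj (tensor_graph (complete_graph m) (complete_graph n)) (\<phi> (i, j)) (\<phi> (0, j))"
        using aut_adj[of "(i, j)" "(0, j)"] that \<open>m \<ge> 1\<close> by simp
      ultimately show ?thesis
        by (simp add: \<beta>_def)
    qed (simp add: \<beta>_def)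
    ultimately show ?thesis
      by (simp add: prod_eq_iff)
  qed
  have "bij_betw \<phi> ({0..<m} \<times> {0..<n}) ({0..<m} \<times> {0..<n})"
    using \<phi> by (simp add: graph_aut_def)
  then have "bij_betw \<alpha> {0..<m} {0..<m}" "bij_betw \<beta> {0..<n} {0..<n}"
    using bij_betw_prod_factors[of \<phi> "{0..<m}" "{0..<n}" 0 0 \<alpha> \<beta>] \<phi>_eq assms(3,4) by simp_all
  with \<phi>_eq show thesis
    by (intro that) simp_all
qed

lemma bij_betw_funpow_return:
  assumes f: "bij_betw f A A" and "finite A" "x \<in> A"
  obtains p where "0 < p" "p \<le> card A" "(f ^^ p) x = x"
proof -
  have "\<not> inj_on (\<lambda>k. (f ^^ k) x) {0..card A}"
  proof
    assume "inj_on (\<lambda>k. (f ^^ k) x) {0..card A}"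
    moreover have "(\<lambda>k. (f ^^ k) x) ` {0..card A} \<subseteq> A"
      using bij_betw_funpow[OF f] \<open>x \<in> A\<close> by (auto intro: bij_betw_apply)
    ultimately have "card {0..card A} \<le> card A"
      using \<open>finite A\<close> by (metis card_inj_on_le)
    then show False by simp
  qed
  then obtain a b where ab: "a < b" "b \<le> card A" "(f ^^ a) x = (f ^^ b) x"
    by (auto simp: inj_on_def) (metis linorder_neqE_nat)
  have "(f ^^ a) ((f ^^ (b - a)) x) = (f ^^ (a + (b - a))) x"
    by (simp add: funpow_add)
  also have "\<dots> = (f ^^ a) x"
    using ab by simp
  finally have "(f ^^ a) ((f ^^ (b - a)) x) = (f ^^ a) x" .
  moreover have "(f ^^ (b - a)) x \<in> A"
    using bij_betw_funpow[OF f] \<open>x \<in> A\<close> by (auto intro: bij_betw_apply)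
  ultimately have "(f ^^ (b - a)) x = x"
    using bij_betw_funpow[OF f, of a] \<open>x \<in> A\<close> by (auto simp: bij_betw_def inj_on_def)
  with ab show thesis
    by (intro that[of "b - a"]) auto
qed

lemma funpow_prod_factors:
  assumes "bij_betw \<alpha> A A" "bij_betw \<beta> B B"
    and \<phi>_eq: "\<And>x y. x \<in> A \<Longrightarrow> y \<in> B \<Longrightarrow> \<phi> (x, y) = (\<alpha> x, \<beta> y)"
    and "a \<in> A" "b \<in> B"
  shows "(\<phi> ^^ k) (a, b) = ((\<alpha> ^^ k) a, (\<beta> ^^ k) b)"
proof (induction k)
  case (Suc k)
  have "(\<alpha> ^^ k) a \<in> A" "(\<beta> ^^ k) b \<in> B"
    using assms by (auto intro: bij_betw_apply bij_betw_funpow)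
  with Suc show ?case by (simp add: \<phi>_eq)
qed simp

lemma coprime_if_dvd_lcm_of_le:
  fixes m n p q :: nat
  assumes "0 < p" "p \<le> m" "0 < q" "q \<le> n" and dvd: "m * n dvd lcm p q"
  shows "coprime m n"
proof -
  have "m * n \<le> lcm p q"
    using dvd assms by (simp add: dvd_imp_le lcm_pos_nat)
  moreover have "lcm p q \<le> p * q"
    using prod_gcd_lcm_nat[of p q] assms by (metis dvd_imp_le dvd_triv_right mult_pos_pos)
  moreover have "p * q \<le> m * n"
    using assms by (simp add: mult_le_mono)
  ultimately have lcm_eq: "lcm p q = m * n" and prod_eq: "p * q = m * n"
    by linarith+
  have "p = m"
  proof (rule ccontr)
    assume "p \<noteq> m"
    with assms have "p * q < m * n"
      by (intro mult_less_le_imp_less) simp_all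
    with prod_eq show False by simp
  qed
  with prod_eq assms have "q = n"
    by simp
  have "gcd m n * (m * n) = 1 * (m * n)"
    using prod_gcd_lcm_nat[of m n] lcm_eq \<open>p = m\<close> \<open>q = n\<close> by (simp only: mult_1)
  then have "gcd m n = 1"
    using assms by simp
  then show ?thesis
    by (simp add: coprime_iff_gcd_eq_1)
qed

theorem lemma3:
  fixes m n :: nat
  assumes "m \<ge> 1" and "n \<ge> 1" and "m \<noteq> n" and "gcd m n > 1"
  shows "\<not> is_circulant (tensor_graph (complete_graph m) (complete_graph n))"
proof
  assume "is_circulant (tensor_graph (complete_graph m) (complete_graph n))"
  then obtain \<phi> where aut: "graph_aut (tensor_graph (complete_graph m) (complete_graph n)) \<phi>"
    and regular: "\<And>u k. u \<in> {0..<m} \<times> {0..<n} \<Longrightarrow> (\<phi> ^^ k) u = u \<Longrightarrow> card ({0..<m} \<times> {0..<n}) dvd k"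
    by (rule is_circulant_obtains_regular_aut) (simp only: verts_tensor_complete)
  obtain \<alpha> \<beta> where \<alpha>: "bij_betw \<alpha> {0..<m} {0..<m}" and \<beta>: "bij_betw \<beta> {0..<n} {0..<n}"
    and \<phi>_eq: "\<And>i j. i < m \<Longrightarrow> j < n \<Longrightarrow> \<phi> (i, j) = (\<alpha> i, \<beta> j)"
    using tensor_complete_aut_is_product[OF aut assms(3,1,2)] by blast
  obtain p where p: "0 < p" "p \<le> card {0..<m}" "(\<alpha> ^^ p) 0 = 0"
    by (rule bij_betw_funpow_return[OF \<alpha>]) (use assms(1) in auto)
  obtain q where q: "0 < q" "q \<le> card {0..<n}" "(\<beta> ^^ q) 0 = 0"
    by (rule bij_betw_funpow_return[OF \<beta>]) (use assms(2) in auto)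
  have "(\<phi> ^^ lcm p q) (0, 0) = ((\<alpha> ^^ lcm p q) 0, (\<beta> ^^ lcm p q) 0)"
    using funpow_prod_factors[OF \<alpha> \<beta>] \<phi>_eq assms(1,2) by simp
  also have "\<dots> = (0, 0)"
    using funpow_mod_eq[OF p(3), of "lcm p q"] funpow_mod_eq[OF q(3), of "lcm p q"] by simp
  finally have "(\<phi> ^^ lcm p q) (0, 0) = (0, 0)" .
  then have "m * n dvd lcm p q"
    using regular[of "(0, 0)"] assms(1,2) by simp
  then have "coprime m n"
    using coprime_if_dvd_lcm_of_le p q by simp
  with \<open>gcd m n > 1\<close> show False
    by simp
qed

end
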